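(* Let $X$ be a real Banach space and $G$ an amenable Hausdorff topological group which is locally compact or SIN, acting continuously on $X$ by affine isometries, and let $M$ be a bi-invariant mean on $G$. Define $R_G:X\to X^{**}$ by $$R_G(x)(x^* ):=M\big(g\mapsto x^*(\pi(g) x)\big),\qquad x\in X,\ x^*\in X^*.$$ Then $R_G$ is a well-defined linear operator with $\|R_G\|\le 1$, and: (1) for every $g\in G$ and $x\in X$, $\pi(g)R_G(x)=R_G(x)=R_G(\pi(g)x)$; (2) $R_G[X]\cap \kappa_X(X)=\kappa_X(I_G)$ where $I_G:=\{x\in X:\pi(g)x=x\text{ for all }g\in G\}$, and $R_G(x)=\kappa_X(x)$ for every $x\in I_G$; (3) $\ker R_G\cap I_G=\{0\}$ and the canonical projection of $\ker R_G+I_G$ onto $I_G$ along $\ker R_G$ has norm at most $1$; (4) the map $\widetilde{P_G}:=R_G^*\circ\kappa_{X^*}:X^*\to X^*$ is a projection of norm at most $1$ with $\widetilde{P_G}[X^*]=\widetilde{I_G}:=\{x^*\in X^*:\pi(g)x^*=x^*\text{ for all }g\in G\}$; (5) $\ker R_G=(\widetilde{I_G})_\perp$. Moreover: (a) if some (equivalently every) orbit of the affine action is bounded, then $R_G(gx)=R_G(x)$ and $\widetilde{P_G}(x^* )(gx)=\widetilde{P_G}(x^* )(x)$ for all $x\in X$, $x^*\in X^*$, $g\in G$; (b) if $G$ is compact (and $M$ is integration against the bi-invariant Haar probability measure $\mu$), then $R_G$ takes values in $\kappa_X(X)$, and, identifying $X$ with $\kappa_X(X)$, $R_G:X\to X$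 is a projection onto $I_G$ of norm at most $1$ given by the Bochner integral $R_G(x)=\int_G\pi(g)x\,d\mu(g)$.
   Context: $\kappa_X:X\to X^{**}$ is the canonical embedding. For $A\subset X^*$, $A_\perp=\{x\in X: a(x)=0\ \forall a\in A\}$. An action of $G$ on $X$ by affine isometries is written $(g,x)\mapsto gx$; its linear part is $\pi(g)x:=gx-g0$, which is an action of $G$ by linear surjective isometries; the dual action on $X^*$ is $(\pi(g)x^* )(x)=x^*(\pi(g^{-1})x)$, and on $X^{**}$ likewise $(\pi(g)\zeta)(x^* )=\zeta(\pi(g^{-1})x^* )$. Spaces of functions on $G$: $(g\cdot f)(h)=f(g^{-1}h)$, $(f\cdot g)(h)=f(hg^{-1})$; $\mathcal{C}^b_{lu}(G)$ (resp. $\mathcal{C}^b_{ru}(G)$) is the set of bounded $f$ with $x\mapsto x^{-1}\cdot f$ (resp. $x\mapsto f\cdot x^{-1}$) norm-continuous into $\ell_\infty(G)$, $\mathcal{C}^b_u(G)$ their intersection. $G$ is amenable if there is a left-invariant mean on $\mathcal{C}^b_{lu}(G)$ (a positive linear functional $M$ with $M(1)=1$ and $M(g\cdot f)=M(f)$). A bi-invariant mean is a positive linear functional $M$ with $M(1)=1$ and $M(g\cdot f)=M(f\cdot g)=M(f)$ for all $g$; it is defined on $\mathcal{C}^b_u(G)$ when $G$ is SIN, and on $L_\infty(G)$ (w.r.t. left Haar measure) when $G$ is locally compact amenable. $G$ is SIN if every neighborhood $U$ of $e$ contains a neighborhood $V$ of $e$ with $gVg^{-1}=V$ for all $g$. 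*)

theory Defs
  imports "HOL-Analysis.Analysis"
begin

section \<open>Topological groups (group written additively, not assumed commutative)\<close>

definition top_group :: "('g::{group_add,topological_space}) itself \<Rightarrow> bool" where
  "top_group _ \<longleftrightarrow> continuous_on UNIV (\<lambda>p::'g\<times>'g. fst p + snd p) \<and> continuous_on UNIV (uminus :: 'g \<Rightarrow> 'g)"

definition is_nbhd_of :: "'a::topological_space set \<Rightarrow> 'a \<Rightarrow> bool" where
  "is_nbhd_of V a \<longleftrightarrow> (\<exists>W. open W \<and> a \<in> W \<and> W \<subseteq> V)"

definition SIN_group :: "('g::{group_add,topological_space}) itself \<Rightarrow> bool" where
  "SIN_group _ \<longleftrightarrow> (\<forall>U::'g set. is_nbhd_of U 0 \<longrightarrow>
      (\<exists>V. is_nbhd_of V 0 \<and> V \<subseteq> U \<and> (\<forall>g. (\<lambda>v. g + v + - g) ` V = V)))"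

definition lshift :: "'g::group_add \<Rightarrow> ('g \<Rightarrow> real) \<Rightarrow> ('g \<Rightarrow> real)" where
  "lshift g f = (\<lambda>h. f (- g + h))"
definition rshift :: "('g \<Rightarrow> real) \<Rightarrow> 'g::group_add \<Rightarrow> ('g \<Rightarrow> real)" where
  "rshift f g = (\<lambda>h. f (h + - g))"

definition sup_norm_continuous :: "('g::topological_space \<Rightarrow> 'g \<Rightarrow> real) \<Rightarrow> bool" where
  "sup_norm_continuous F \<longleftrightarrow> (\<forall>x0 e. e > 0 \<longrightarrow>
      (\<forall>\<^sub>F x in nhds x0. \<forall>h. \<bar>F x h - F x0 h\<bar> \<le> e))"

definition Cb_lu :: "('g::{group_add,topological_space} \<Rightarrow> real) set" where
  "Cb_lu = {f. bounded (range f) \<and> sup_norm_continuous (\<lambda>x. lshift (- x) f)}"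
definition Cb_ru :: "('g::{group_add,topological_space} \<Rightarrow> real) set" where
  "Cb_ru = {f. bounded (range f) \<and> sup_norm_continuous (\<lambda>x. rshift f (- x))}"
definition Cb_u :: "('g::{group_add,topological_space} \<Rightarrow> real) set" where
  "Cb_u = Cb_lu \<inter> Cb_ru"

definition mean_on :: "('g \<Rightarrow> real) set \<Rightarrow> (('g \<Rightarrow> real) \<Rightarrow> real) \<Rightarrow> bool" where
  "mean_on D M \<longleftrightarrow>
     (\<forall>f\<in>D. \<forall>h\<in>D. \<forall>a b. M (\<lambda>t. a * f t + b * h t) = a * M f + b * M h) \<and>
     (\<forall>f\<in>D. (\<forall>t. f t \<ge> 0) \<longrightarrow> M f \<ge> 0) \<and>
     M (\<lambda>_. 1) = 1"

definition left_invariant_mean_on :: "('g::group_add \<Rightarrow> real) set \<Rightarrow> (('g \<Rightarrow> real) \<Rightarrow> real) \<Rightarrow> bool" where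
  "left_invariant_mean_on D M \<longleftrightarrow> mean_on D M \<and> (\<forall>g. \<forall>f\<in>D. M (lshift g f) = M f)"

definition bi_invariant_mean_on :: "('g::group_add \<Rightarrow> real) set \<Rightarrow> (('g \<Rightarrow> real) \<Rightarrow> real) \<Rightarrow> bool" where
  "bi_invariant_mean_on D M \<longleftrightarrow> mean_on D M \<and>
     (\<forall>g. \<forall>f\<in>D. M (lshift g f) = M f \<and> M (rshift f g) = M f)"

definition amenable :: "('g::{group_add,topological_space}) itself \<Rightarrow> bool" where
  "amenable _ \<longleftrightarrow> (\<exists>M. left_invariant_mean_on (Cb_lu :: ('g \<Rightarrow> real) set) M)"

definition left_Haar :: "'g::{group_add,topological_space} measure \<Rightarrow> bool" where
  "left_Haar \<mu> \<longleftrightarrow> space \<mu> = UNIV \<and> sets \<mu> = sets borel \<and>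
     (\<forall>g. \<forall>A\<in>sets borel. emeasure \<mu> ((\<lambda>h. g + h) ` A) = emeasure \<mu> A) \<and>
     (\<forall>K. compact K \<longrightarrow> emeasure \<mu> K < \<infinity>) \<and>
     (\<forall>U. open U \<and> U \<noteq> {} \<longrightarrow> emeasure \<mu> U > 0) \<and>
     (\<forall>A\<in>sets borel. emeasure \<mu> A = (INF U\<in>{U. open U \<and> A \<subseteq> U}. emeasure \<mu> U)) \<and>
     (\<forall>U. open U \<longrightarrow> emeasure \<mu> U = (SUP K\<in>{K. compact K \<and> K \<subseteq> U}. emeasure \<mu> K))"

definition Haar_probability :: "'g::{group_add,topological_space} measure \<Rightarrow> bool" where
  "Haar_probability \<mu> \<longleftrightarrow> left_Haar \<mu> \<and> emeasure \<mu> UNIV = 1 \<and>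
     (\<forall>g. \<forall>A\<in>sets borel. emeasure \<mu> ((\<lambda>h. h + g) ` A) = emeasure \<mu> A)"

text \<open>Bounded Borel functions, representing (a subspace of) L-infinity(G); a mean on
  L-infinity is required to respect equality almost everywhere.\<close>
definition Linf_repr :: "'g::topological_space measure \<Rightarrow> ('g \<Rightarrow> real) set" where
  "Linf_repr \<mu> = {f. bounded (range f) \<and> f \<in> borel_measurable \<mu>}"

definition respects_ae :: "'g measure \<Rightarrow> ('g \<Rightarrow> real) set \<Rightarrow> (('g \<Rightarrow> real) \<Rightarrow> real) \<Rightarrow> bool" where
  "respects_ae \<mu> D M \<longleftrightarrow> (\<forall>f\<in>D. \<forall>h\<in>D. (AE t in \<mu>. f t = h t) \<longrightarrow> M f = M h)"

definition simple_fn :: "'g measure \<Rightarrow> ('g \<Rightarrow> 'x::real_normed_vector) \<Rightarrow> bool" where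
  "simple_fn \<mu> s \<longleftrightarrow> finite (range s) \<and> (\<forall>y. s -` {y} \<inter> space \<mu> \<in> sets \<mu>) \<and>
     (\<forall>y. y \<noteq> 0 \<longrightarrow> emeasure \<mu> (s -` {y} \<inter> space \<mu>) < \<infinity>)"

definition simple_int :: "'g measure \<Rightarrow> ('g \<Rightarrow> 'x::real_normed_vector) \<Rightarrow> 'x" where
  "simple_int \<mu> s = (\<Sum>y\<in>range s. measure \<mu> (s -` {y} \<inter> space \<mu>) *\<^sub>R y)"

definition has_bochner_int :: "'g measure \<Rightarrow> ('g \<Rightarrow> 'x::real_normed_vector) \<Rightarrow> 'x \<Rightarrow> bool" where
  "has_bochner_int \<mu> f v \<longleftrightarrow> (\<exists>s. (\<forall>n. simple_fn \<mu> (s n)) \<and>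
      (AE t in \<mu>. (\<lambda>n. s n t) \<longlonglongrightarrow> f t) \<and>
      (\<lambda>n. \<integral>\<^sup>+ t. ennreal (norm (s n t - f t)) \<partial>\<mu>) \<longlonglongrightarrow> 0 \<and>
      (\<lambda>n. simple_int \<mu> (s n)) \<longlonglongrightarrow> v)"

definition affine_isometric_action :: "('g::{group_add,topological_space} \<Rightarrow> 'x::real_normed_vector \<Rightarrow> 'x) \<Rightarrow> bool" where
  "affine_isometric_action act \<longleftrightarrow>
     (\<forall>x. act 0 x = x) \<and> (\<forall>g h x. act (g + h) x = act g (act h x)) \<and>
     (\<forall>g. linear (\<lambda>x. act g x - act g 0)) \<and>
     (\<forall>g x y. dist (act g x) (act g y) = dist x y) \<and>
     continuous_on UNIV (\<lambda>p. act (fst p) (snd p))"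

definition lin_part :: "('g \<Rightarrow> 'x::real_normed_vector \<Rightarrow> 'x) \<Rightarrow> 'g \<Rightarrow> 'x \<Rightarrow> 'x" where
  "lin_part act g x = act g x - act g 0"

definition fixed_pts :: "('g \<Rightarrow> 'x::real_normed_vector \<Rightarrow> 'x) \<Rightarrow> 'x set" where
  "fixed_pts act = {x. \<forall>g. lin_part act g x = x}"

definition dual_act :: "('g::group_add \<Rightarrow> 'x::real_normed_vector \<Rightarrow> 'x) \<Rightarrow> 'g \<Rightarrow> ('x \<Rightarrow>\<^sub>L real) \<Rightarrow> ('x \<Rightarrow>\<^sub>L real)" where
  "dual_act act g xs = Blinfun (\<lambda>x. blinfun_apply xs (lin_part act (- g) x))"

definition bidual_act :: "('g::group_add \<Rightarrow> 'x::real_normed_vector \<Rightarrow> 'x) \<Rightarrow> 'g \<Rightarrow>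
    (('x \<Rightarrow>\<^sub>L real) \<Rightarrow>\<^sub>L real) \<Rightarrow> (('x \<Rightarrow>\<^sub>L real) \<Rightarrow>\<^sub>L real)" where
  "bidual_act act g z = Blinfun (\<lambda>xs. blinfun_apply z (dual_act act (- g) xs))"

definition dual_fixed_pts :: "('g::group_add \<Rightarrow> 'x::real_normed_vector \<Rightarrow> 'x) \<Rightarrow> ('x \<Rightarrow>\<^sub>L real) set" where
  "dual_fixed_pts act = {xs. \<forall>g. dual_act act g xs = xs}"

definition kappa :: "'x::real_normed_vector \<Rightarrow> ('x \<Rightarrow>\<^sub>L real) \<Rightarrow>\<^sub>L real" where
  "kappa x = Blinfun (\<lambda>f. blinfun_apply f x)"

definition pre_annihilator :: "('x::real_normed_vector \<Rightarrow>\<^sub>L real) set \<Rightarrow> 'x set" where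
  "pre_annihilator A = {x. \<forall>a\<in>A. blinfun_apply a x = 0}"

text \<open>P~ = R^* o kappa_{X^*}:  (R^*(kappa xs)) = (kappa xs) o R.\<close>
definition Ptilde :: "('x::real_normed_vector \<Rightarrow>\<^sub>L (('x \<Rightarrow>\<^sub>L real) \<Rightarrow>\<^sub>L real)) \<Rightarrow> ('x \<Rightarrow>\<^sub>L real) \<Rightarrow> ('x \<Rightarrow>\<^sub>L real)" where
  "Ptilde R xs = kappa xs o\<^sub>L R"

end

theory Submission
  imports Defs
begin

(* Left invariance of the
   mean makes R_G x a fixed point of the bidual action, right invariance makes R_G constant along
   orbits.  If x or x* is invariant, the averaged function g |-> x*(pi(g) x) is constant, so R_G x
   evaluates x* at x; together with the isometry of the canonical embedding (Hahn-Banach, by Zorn's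
   lemma on norm-dominated partial graphs) this gives (2)-(5).  When orbits are bounded, the
   translation part g |-> g0 is a bounded cocycle whose averaged functionals vanish, which gives (a).
   For compact G the orbit map has compact range, so it is a uniform limit of finitely valued Borel
   functions; their integrals form a Cauchy sequence because the canonical embedding is isometric,
   and the limit is a Bochner integral representing R_G x, which gives (b). *)

section \<open>Norming functionals\<close>

definition norm_dominated_graph :: "('a::real_normed_vector \<times> real) set \<Rightarrow> bool" where
  "norm_dominated_graph H \<longleftrightarrow> subspace H \<and> (\<forall>(x, a)\<in>H. a \<le> norm x)"

lemma norm_dominated_graphD:
  assumes "norm_dominated_graph H"
  shows "subspace H" "(x, a) \<in> H \<Longrightarrow> a \<le> norm x"
  using assms unfolding norm_dominated_graph_def by auto

lemma norm_dominated_graph_functional: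
  assumes H: "norm_dominated_graph H" and "(x, a) \<in> H" "(x, b) \<in> H"
  shows "a = b"
proof -
  have "(0, a - b) \<in> H" "(0, b - a) \<in> H"
    using subspace_diff[OF norm_dominated_graphD(1)[OF H]] assms(2,3) by force+
  then have "a - b \<le> 0" "b - a \<le> 0" using norm_dominated_graphD(2)[OF H] by force+
  then show ?thesis by simp
qed

lemma norm_dominated_graph_extension_value:
  assumes H: "norm_dominated_graph H"
  obtains c where "\<And>x a. (x, a) \<in> H \<Longrightarrow> a - norm (x - y) \<le> c"
    "\<And>z b. (z, b) \<in> H \<Longrightarrow> c \<le> norm (z + y) - b"
proof -
  have sub: "subspace H" and dom: "\<And>x a. (x, a) \<in> H \<Longrightarrow> a \<le> norm x"
    using norm_dominated_graphD[OF H] by auto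
  have "0 \<in> H" using subspace_0[OF sub] .
  then have zero: "(0, 0) \<in> H" by (simp add: zero_prod_def)
  have key: "a - norm (x - y) \<le> norm (z + y) - b" if "(x, a) \<in> H" "(z, b) \<in> H" for x a z b
  proof -
    have "(x + z, a + b) \<in> H" using subspace_add[OF sub that] by simp
    then have "a + b \<le> norm ((x - y) + (z + y))" using dom by simp
    also have "\<dots> \<le> norm (x - y) + norm (z + y)" by (rule norm_triangle_ineq)
    finally show ?thesis by simp
  qed
  define c where "c = (SUP (x, a)\<in>H. a - norm (x - y))"
  show ?thesis
  proof
    show "a - norm (x - y) \<le> c" if "(x, a) \<in> H" for x a
      unfolding c_def using key[OF _ zero] that
      by (intro cSUP_upper2[where x="(x, a)"] bdd_aboveI2[where M="norm y"]) auto
    show "c \<le> norm (z + y) - b" if "(z, b) \<in> H" for z b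
      unfolding c_def using key[OF _ that] zero by (intro cSUP_least) auto
  qed
qed

lemma norm_dominated_graph_extension_bound:
  assumes H: "norm_dominated_graph H" and "(x, a) \<in> H"
    and below: "\<And>x a. (x, a) \<in> H \<Longrightarrow> a - norm (x - y) \<le> c"
    and above: "\<And>z b. (z, b) \<in> H \<Longrightarrow> c \<le> norm (z + y) - b"
  shows "a + t * c \<le> norm (x + t *\<^sub>R y)"
proof -
  have sub: "subspace H" using norm_dominated_graphD(1)[OF H] .
  consider "t = 0" | "t > 0" | "t < 0" by linarith
  then show ?thesis
  proof cases
    case 1 then show ?thesis using norm_dominated_graphD(2)[OF H assms(2)] by simp
  next
    case 2
    have "((1 / t) *\<^sub>R x, (1 / t) * a) \<in> H" using subspace_scale[OF sub assms(2), of "1 / t"] by simp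
    from above[OF this] have "t * c \<le> t * norm ((1 / t) *\<^sub>R x + y) - a"
      using 2 mult_left_mono[of _ _ t] by (fastforce simp: right_diff_distrib)
    also have "t * norm ((1 / t) *\<^sub>R x + y) = norm (x + t *\<^sub>R y)"
      using 2 norm_scaleR[of t "(1 / t) *\<^sub>R x + y"] by (simp add: scaleR_add_right)
    finally show ?thesis by simp
  next
    case 3
    have "((- 1 / t) *\<^sub>R x, (- 1 / t) * a) \<in> H" using subspace_scale[OF sub assms(2), of "- 1 / t"] by simp
    from below[OF this] have "a - (- t) * norm ((- 1 / t) *\<^sub>R x - y) \<le> - t * c"
      using 3 mult_left_mono[of _ _ "- t"] by (fastforce simp: right_diff_distrib)
    also have "(- t) * norm ((- 1 / t) *\<^sub>R x - y) = norm (x + t *\<^sub>R y)"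
      using 3 norm_scaleR[of "- t" "(- 1 / t) *\<^sub>R x - y"] by (simp add: scaleR_diff_right)
    finally show ?thesis by simp
  qed
qed

lemma norm_dominated_graph_extend:
  assumes H: "norm_dominated_graph H" and y: "\<forall>a. (y, a) \<notin> H"
  obtains H' where "norm_dominated_graph H'" "H \<subset> H'"
proof -
  obtain c where below: "\<And>x a. (x, a) \<in> H \<Longrightarrow> a - norm (x - y) \<le> c"
    and above: "\<And>z b. (z, b) \<in> H \<Longrightarrow> c \<le> norm (z + y) - b"
    using norm_dominated_graph_extension_value[OF H] by blast
  define H' where "H' = span (insert (y, c) H)"
  have "norm_dominated_graph H'"
    unfolding norm_dominated_graph_def
  proof (intro conjI ballI)
    show "subspace H'" unfolding H'_def by simp
    fix p assume "p \<in> H'"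
    then obtain t where "p - t *\<^sub>R (y, c) \<in> H"
      unfolding H'_def span_breakdown_eq span_eq_iff[THEN iffD2, OF norm_dominated_graphD(1)[OF H]]
      by blast
    then show "case p of (x, a) \<Rightarrow> a \<le> norm x"
      using norm_dominated_graph_extension_bound[OF H _ below above, of "fst p - t *\<^sub>R y" "snd p - t * c" t]
      by (cases p) simp
  qed
  moreover have "H \<subset> H'"
    using y span_superset[of "insert (y, c) H"] unfolding H'_def by blast
  ultimately show ?thesis by (rule that)
qed

lemma norm_dominated_graph_chain_Union:
  assumes "C \<noteq> {}" "subset.chain {H. norm_dominated_graph H \<and> p \<in> H} C"
  shows "\<Union>C \<in> {H. norm_dominated_graph H \<and> p \<in> H}"
proof -
  have C: "\<And>H. H \<in> C \<Longrightarrow> norm_dominated_graph H \<and> p \<in> H"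
    and total: "\<And>H K. H \<in> C \<Longrightarrow> K \<in> C \<Longrightarrow> H \<subseteq> K \<or> K \<subseteq> H"
    using assms(2) unfolding subset.chain_def by auto
  have "subspace (\<Union>C)"
  proof (rule subspaceI)
    show "0 \<in> \<Union>C" using assms(1) C norm_dominated_graphD(1) subspace_0 by blast
    fix q r assume "q \<in> \<Union>C" "r \<in> \<Union>C"
    then obtain H where "H \<in> C" "q \<in> H" "r \<in> H" using total by blast
    then show "q + r \<in> \<Union>C" using C norm_dominated_graphD(1) subspace_add by blast
  next
    fix t q assume "q \<in> \<Union>C"
    then show "t *\<^sub>R q \<in> \<Union>C" using C norm_dominated_graphD(1) subspace_scale by blast
  qed
  moreover have "a \<le> norm x" if "(x, a) \<in> \<Union>C" for x a
    using that C norm_dominated_graphD(2) by blast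
  ultimately show ?thesis
    using assms(1) C unfolding norm_dominated_graph_def by blast
qed

lemma exists_norming_functional:
  fixes x0 :: "'a::real_normed_vector"
  obtains f :: "'a \<Rightarrow>\<^sub>L real" where "norm f \<le> 1" "f x0 = norm x0"
proof -
  let ?A = "{H. norm_dominated_graph H \<and> (x0, norm x0) \<in> H}"
  have "a \<le> norm x" if "(x, a) \<in> span {(x0, norm x0)}" for x a
    using that by (auto simp: span_singleton intro!: mult_right_mono)
  then have "span {(x0, norm x0)} \<in> ?A"
    by (auto simp: norm_dominated_graph_def span_base)
  then have "\<exists>H\<in>?A. \<forall>K\<in>?A. H \<subseteq> K \<longrightarrow> K = H"
    using norm_dominated_graph_chain_Union by (intro subset_Zorn_nonempty) blast+
  then obtain H where H: "H \<in> ?A" and max: "\<And>K. K \<in> ?A \<Longrightarrow> H \<subseteq> K \<Longrightarrow> K = H"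
    by blast
  then have dom: "norm_dominated_graph H" and sub: "subspace H" using norm_dominated_graphD by auto
  have "\<exists>a. (y, a) \<in> H" for y
  proof (rule ccontr)
    assume "\<nexists>a. (y, a) \<in> H"
    then obtain K where "norm_dominated_graph K" "H \<subset> K"
      using norm_dominated_graph_extend[OF dom] by blast
    then show False using max[of K] H by blast
  qed
  then obtain f where f: "\<And>y. (y, f y) \<in> H" by metis
  have graph: "(y, a) \<in> H \<Longrightarrow> f y = a" for y a
    using norm_dominated_graph_functional[OF dom f] .
  have add: "f (x + y) = f x + f y" for x y
    using graph subspace_add[OF sub f f] by simp
  have scale: "f (t *\<^sub>R x) = t *\<^sub>R f x" for t x
    using graph subspace_scale[OF sub f] by simp
  have bound: "norm (f y) \<le> norm y * 1" for y
    using norm_dominated_graphD(2)[OF dom f, of y] norm_dominated_graphD(2)[OF dom f, of "- y"]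
      scale[of "- 1" y] by auto
  have "bounded_linear f" using add scale bound by (rule bounded_linear_intro)
  moreover have "f x0 = norm x0" using graph H by simp
  ultimately show ?thesis
    using bound that[of "Blinfun f"] by (simp add: bounded_linear_Blinfun_apply norm_blinfun_bound)
qed

lemma kappa_apply [simp]: "kappa x f = f x"
  unfolding kappa_def by (simp add: bounded_linear_Blinfun_apply)

lemma norm_kappa_le: "norm (kappa x) \<le> norm x"
proof (rule norm_blinfun_bound)
  show "norm (kappa x f) \<le> norm x * norm f" for f :: "'a \<Rightarrow>\<^sub>L real"
    using norm_blinfun[of f x] by (simp add: mult.commute)
qed simp

lemma bounded_linear_kappa: "bounded_linear kappa"
proof (rule bounded_linear_intro[where K = 1])
  show "kappa (x + y) = kappa x + kappa y" for x y :: 'a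
    by (rule blinfun_eqI) (simp add: blinfun.add_right plus_blinfun.rep_eq)
  show "kappa (r *\<^sub>R x) = r *\<^sub>R kappa x" for r and x :: 'a
    by (rule blinfun_eqI) (simp add: blinfun.scaleR_right scaleR_blinfun.rep_eq)
  show "norm (kappa x) \<le> norm x * 1" for x :: 'a
    using norm_kappa_le by simp
qed

lemma norm_kappa [simp]: "norm (kappa x) = norm x"
proof (rule antisym)
  show "norm (kappa x) \<le> norm x" by (rule norm_kappa_le)
  obtain f :: "'a \<Rightarrow>\<^sub>L real" where f: "norm f \<le> 1" "f x = norm x"
    by (rule exists_norming_functional)
  have "norm x = norm (kappa x f)" using f by simp
  also have "\<dots> \<le> norm (kappa x) * norm f" by (rule norm_blinfun)
  also have "\<dots> \<le> norm (kappa x)" using f(1) by (simp add: mult_left_le)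
  finally show "norm x \<le> norm (kappa x)" .
qed

lemma kappa_add: "kappa (x + y) = kappa x + kappa y"
  by (rule linear_add[OF bounded_linear.linear[OF bounded_linear_kappa]])

lemma kappa_scaleR: "kappa (r *\<^sub>R x) = r *\<^sub>R kappa x"
  by (rule linear_scale[OF bounded_linear.linear[OF bounded_linear_kappa]])

lemma kappa_diff: "kappa (x - y) = kappa x - kappa y"
  by (rule linear_diff[OF bounded_linear.linear[OF bounded_linear_kappa]])

lemma dist_kappa [simp]: "dist (kappa x) (kappa y) = dist x y"
  by (simp add: dist_norm flip: kappa_diff)

lemma kappa_inject [simp]: "kappa x = kappa y \<longleftrightarrow> x = y"
  by (metis dist_eq_0_iff dist_kappa)

lemma Ptilde_apply [simp]: "Ptilde R xs x = R x xs"
  unfolding Ptilde_def by simp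

section \<open>Function spaces on the group\<close>

lemma bounded_range_lin_comb:
  fixes f h :: "'a \<Rightarrow> real"
  assumes "bounded (range f)" "bounded (range h)"
  shows "bounded (range (\<lambda>t. a * f t + b * h t))"
proof -
  obtain B where B: "\<And>t. norm (f t) \<le> B" using assms(1) unfolding bounded_iff by blast
  obtain C where C: "\<And>t. norm (h t) \<le> C" using assms(2) unfolding bounded_iff by blast
  have "\<bar>a * f t + b * h t\<bar> \<le> \<bar>a\<bar> * B + \<bar>b\<bar> * C" for t
  proof -
    have "\<bar>a * f t + b * h t\<bar> \<le> \<bar>a\<bar> * \<bar>f t\<bar> + \<bar>b\<bar> * \<bar>h t\<bar>"
      using abs_triangle_ineq[of "a * f t" "b * h t"] by (simp add: abs_mult)
    also have "\<dots> \<le> \<bar>a\<bar> * B + \<bar>b\<bar> * C"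
      using B[of t] C[of t] by (intro add_mono mult_left_mono) auto
    finally show ?thesis .
  qed
  then show ?thesis unfolding bounded_iff by auto
qed

lemma bounded_range_blinfun_comp:
  "bounded (range \<phi>) \<Longrightarrow> bounded (range (\<lambda>t. blinfun_apply xs (\<phi> t)))"
  using bounded_linear_image[OF _ blinfun.bounded_linear_right, of "range \<phi>" xs]
  by (simp add: image_image)

lemma sup_norm_continuous_lin_comb:
  assumes "sup_norm_continuous F" "sup_norm_continuous G"
  shows "sup_norm_continuous (\<lambda>x h. a * F x h + b * G x h)"
  unfolding sup_norm_continuous_def
proof (intro allI impI)
  fix x0 and e :: real assume "e > 0"
  define d where "d = e / (\<bar>a\<bar> + \<bar>b\<bar> + 1)"
  have d: "d > 0" "(\<bar>a\<bar> + \<bar>b\<bar>) * d \<le> e"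
    using \<open>e > 0\<close> by (auto simp: d_def field_simps add_pos_nonneg)
  have "\<forall>\<^sub>F x in nhds x0. (\<forall>h. \<bar>F x h - F x0 h\<bar> \<le> d) \<and> (\<forall>h. \<bar>G x h - G x0 h\<bar> \<le> d)"
    using assms d(1) unfolding sup_norm_continuous_def by (simp add: eventually_conj)
  then show "\<forall>\<^sub>F x in nhds x0. \<forall>h. \<bar>(a * F x h + b * G x h) - (a * F x0 h + b * G x0 h)\<bar> \<le> e"
  proof (rule eventually_mono, intro allI)
    fix x h assume "(\<forall>h. \<bar>F x h - F x0 h\<bar> \<le> d) \<and> (\<forall>h. \<bar>G x h - G x0 h\<bar> \<le> d)"
    then have "\<bar>a * (F x h - F x0 h)\<bar> + \<bar>b * (G x h - G x0 h)\<bar> \<le> (\<bar>a\<bar> + \<bar>b\<bar>) * d"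
      by (simp add: abs_mult distrib_right add_mono mult_left_mono)
    then show "\<bar>(a * F x h + b * G x h) - (a * F x0 h + b * G x0 h)\<bar> \<le> e"
      using d(2) by (smt (verit, best) right_diff_distrib)
  qed
qed

lemma const_in_Cb_u: "(\<lambda>_. c) \<in> Cb_u"
  by (simp add: Cb_u_def Cb_lu_def Cb_ru_def lshift_def rshift_def sup_norm_continuous_def)

lemma lin_comb_in_Cb_u:
  assumes "f \<in> Cb_u" "h \<in> Cb_u"
  shows "(\<lambda>t. a * f t + b * h t) \<in> Cb_u"
  using assms bounded_range_lin_comb[of f h a b]
    sup_norm_continuous_lin_comb[of "\<lambda>x. lshift (- x) f" "\<lambda>x. lshift (- x) h"]
    sup_norm_continuous_lin_comb[of "\<lambda>x. rshift f (- x)" "\<lambda>x. rshift h (- x)"]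
  by (simp add: Cb_u_def Cb_lu_def Cb_ru_def lshift_def rshift_def)

lemma const_in_Linf_repr: "(\<lambda>_. c) \<in> Linf_repr \<mu>"
  by (simp add: Linf_repr_def)

lemma lin_comb_in_Linf_repr:
  "f \<in> Linf_repr \<mu> \<Longrightarrow> h \<in> Linf_repr \<mu> \<Longrightarrow> (\<lambda>t. a * f t + b * h t) \<in> Linf_repr \<mu>"
  using bounded_range_lin_comb by (auto simp: Linf_repr_def)

lemma continuous_functional_in_Linf_repr:
  assumes "sets \<mu> = sets borel" "continuous_on UNIV \<phi>" "bounded (range \<phi>)"
  shows "(\<lambda>t. blinfun_apply xs (\<phi> t)) \<in> Linf_repr \<mu>"
proof -
  have "continuous_on UNIV (\<lambda>t. blinfun_apply xs (\<phi> t))"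
    by (intro continuous_intros assms(2))
  then have "(\<lambda>t. blinfun_apply xs (\<phi> t)) \<in> borel_measurable \<mu>"
    using borel_measurable_continuous_onI measurable_cong_sets[OF assms(1) refl] by blast
  then show ?thesis
    using bounded_range_blinfun_comp[OF assms(3)] by (simp add: Linf_repr_def)
qed

lemma functional_diff_le:
  assumes "dist (\<phi> (h + a)) (\<phi> (h + b)) = dist (\<phi> a) (\<phi> b)"
  shows "\<bar>blinfun_apply xs (\<phi> (h + a)) - xs (\<phi> (h + b))\<bar> \<le> (norm xs + 1) * dist (\<phi> a) (\<phi> b)"
proof -
  have "\<bar>xs (\<phi> (h + a)) - xs (\<phi> (h + b))\<bar> \<le> norm xs * dist (\<phi> (h + a)) (\<phi> (h + b))"
    using norm_blinfun[of xs "\<phi> (h + a) - \<phi> (h + b)"] by (simp add: blinfun.diff_right dist_norm)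
  also have "\<dots> \<le> (norm xs + 1) * dist (\<phi> a) (\<phi> b)"
    using assms by (simp add: mult_right_mono)
  finally show ?thesis .
qed

lemma top_group_continuous_add_left:
  assumes "top_group TYPE('g::{group_add,topological_space})"
  shows "continuous_on UNIV (\<lambda>x::'g. a + x)"
proof -
  have add: "continuous_on UNIV (\<lambda>p::'g \<times> 'g. fst p + snd p)"
    using assms unfolding top_group_def by blast
  have "continuous_on UNIV ((\<lambda>p. fst p + snd p) \<circ> (\<lambda>x::'g. (a, x)))"
    by (intro continuous_on_compose continuous_on_subset[OF add]) (auto intro!: continuous_intros)
  then show ?thesis by (simp add: o_def)
qed

context
  fixes \<phi> :: "'g::{group_add,topological_space} \<Rightarrow> 'x::real_normed_vector"
    and xs :: "'x \<Rightarrow>\<^sub>L real"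
  assumes continuous: "continuous_on UNIV \<phi>"
    and left_isometric: "\<And>h a b. dist (\<phi> (h + a)) (\<phi> (h + b)) = dist (\<phi> a) (\<phi> b)"
begin

lemma functional_close:
  assumes "e > 0"
  shows "\<exists>U. open U \<and> x0 \<in> U \<and>
    (\<forall>x\<in>U. \<forall>h. \<bar>blinfun_apply xs (\<phi> (h + x)) - xs (\<phi> (h + x0))\<bar> \<le> e)"
proof (intro exI conjI ballI allI)
  let ?U = "\<phi> -` ball (\<phi> x0) (e / (norm xs + 1))"
  show "open ?U" by (intro open_vimage continuous open_ball)
  show "x0 \<in> ?U" using assms by (simp add: add_nonneg_pos divide_pos_pos)
  fix x h assume "x \<in> ?U"
  then have "(norm xs + 1) * dist (\<phi> x) (\<phi> x0) \<le> e"
    by (simp add: dist_commute field_simps add_pos_nonneg)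
  then show "\<bar>xs (\<phi> (h + x)) - xs (\<phi> (h + x0))\<bar> \<le> e"
    using functional_diff_le[of \<phi> h x x0 xs, OF left_isometric] by linarith
qed

lemma functional_in_Cb_ru:
  assumes "bounded (range \<phi>)"
  shows "(\<lambda>t. xs (\<phi> t)) \<in> Cb_ru"
proof -
  have "\<forall>\<^sub>F x in nhds x0. \<forall>h. \<bar>xs (\<phi> (h + x)) - xs (\<phi> (h + x0))\<bar> \<le> e" if "e > 0" for x0 e
    using functional_close[OF that, of x0] unfolding eventually_nhds by blast
  then show ?thesis
    unfolding Cb_ru_def sup_norm_continuous_def rshift_def
    using bounded_range_blinfun_comp[OF assms] by simp
qed

text \<open>Left uniform continuity needs small conjugation-invariant neighbourhoods: \<open>x + h\<close> differs
  from \<open>x0 + h\<close> by the conjugate \<open>- h + (- x0 + x) + h\<close> of \<open>- x0 + x\<close>.\<close>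
lemma functional_in_Cb_lu:
  assumes "top_group TYPE('g)" "SIN_group TYPE('g)" "bounded (range \<phi>)"
  shows "(\<lambda>t. xs (\<phi> t)) \<in> Cb_lu"
proof -
  have "\<forall>\<^sub>F x in nhds x0. \<forall>h. \<bar>xs (\<phi> (x + h)) - xs (\<phi> (x0 + h))\<bar> \<le> e" if "e > 0" for x0 e
  proof -
    obtain U where U: "open U" "0 \<in> U"
      and close: "\<And>v. v \<in> U \<Longrightarrow> \<bar>xs (\<phi> (h + v)) - xs (\<phi> (h + 0))\<bar> \<le> e" for h
      using functional_close[OF \<open>e > 0\<close>, of 0] by blast
    then have "is_nbhd_of U 0" unfolding is_nbhd_of_def by blast
    then obtain V where V: "is_nbhd_of V 0" "V \<subseteq> U" "\<And>g. (\<lambda>v. g + v + - g) ` V = V"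
      using assms(2) unfolding SIN_group_def by blast
    then obtain W where W: "open W" "0 \<in> W" "W \<subseteq> V" unfolding is_nbhd_of_def by blast
    have "open ((\<lambda>x. - x0 + x) -` W)"
      by (rule open_vimage[OF W(1) top_group_continuous_add_left[OF assms(1)]])
    moreover have "x0 \<in> (\<lambda>x. - x0 + x) -` W" using W(2) by simp
    moreover have "\<bar>xs (\<phi> (x + h)) - xs (\<phi> (x0 + h))\<bar> \<le> e" if "- x0 + x \<in> W" for x h
    proof -
      have "- h + (- x0 + x) + - (- h) \<in> V" using V(3)[of "- h"] that W(3) by blast
      then have "- h + (- x0 + x) + h \<in> U" using V(2) by auto
      moreover have "x0 + h + (- h + (- x0 + x) + h) = x + h" by (simp add: add.assoc)
      ultimately show ?thesis using close[of "- h + (- x0 + x) + h" "x0 + h"] by simp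
    qed
    ultimately show ?thesis unfolding eventually_nhds by blast
  qed
  then show ?thesis
    unfolding Cb_lu_def sup_norm_continuous_def lshift_def
    using bounded_range_blinfun_comp[OF assms(3)] by simp
qed

end

lemma functional_in_Cb_u:
  fixes \<phi> :: "'g::{group_add,topological_space} \<Rightarrow> 'x::real_normed_vector"
  assumes "top_group TYPE('g)" "SIN_group TYPE('g)" "continuous_on UNIV \<phi>"
    "\<And>h a b. dist (\<phi> (h + a)) (\<phi> (h + b)) = dist (\<phi> a) (\<phi> b)" "bounded (range \<phi>)"
  shows "(\<lambda>t. blinfun_apply xs (\<phi> t)) \<in> Cb_u"
  using functional_in_Cb_lu[OF assms(3,4,1,2,5)] functional_in_Cb_ru[OF assms(3,4,5)]
  by (simp add: Cb_u_def)

section \<open>Bochner integrals of functions with compact range\<close>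

fun first_ball_center :: "'x::real_normed_vector list \<Rightarrow> real \<Rightarrow> 'x \<Rightarrow> 'x" where
  "first_ball_center [] r y = 0"
| "first_ball_center (c # cs) r y = (if y \<in> ball c r then c else first_ball_center cs r y)"

lemma dist_first_ball_center: "\<exists>c\<in>set cs. dist c y < r \<Longrightarrow> dist (first_ball_center cs r y) y < r"
  by (induction cs) auto

lemma range_first_ball_center: "range (first_ball_center cs r) \<subseteq> insert 0 (set cs)"
  by (induction cs) auto

lemma borel_measurable_first_ball_center: "first_ball_center cs r \<in> borel_measurable borel"
proof (induction cs)
  case (Cons c cs)
  have eq: "first_ball_center (c # cs) r = (\<lambda>y. if y \<in> ball c r then c else first_ball_center cs r y)"
    by auto
  have "ball c r \<in> sets borel" by (rule borel_open[OF open_ball])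
  then show ?case
    unfolding eq by (intro measurable_If_set measurable_const Cons.IH) (simp_all add: space_borel)
qed simp

lemma uniform_simple_approximation:
  fixes f :: "'a \<Rightarrow> 'x::real_normed_vector"
  assumes "finite_measure \<mu>" "f \<in> borel_measurable \<mu>" "compact (range f)"
  obtains s where "\<And>n. simple_fn \<mu> (s n)" "\<And>n. s n \<in> borel_measurable \<mu>"
    "\<And>n t. dist (s n t) (f t) < inverse (real (Suc n))"
proof -
  have "\<exists>cs. range f \<subseteq> (\<Union>c\<in>set cs. ball c (inverse (real (Suc n))))" for n
  proof -
    obtain k where "finite k" "range f \<subseteq> (\<Union>c\<in>k. ball c (inverse (real (Suc n))))"
      using assms(3) unfolding compact_eq_totally_bounded by (meson inverse_Suc)
    then show ?thesis using finite_list by metis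
  qed
  then obtain cs where cs: "\<And>n. range f \<subseteq> (\<Union>c\<in>set (cs n). ball c (inverse (real (Suc n))))"
    by metis
  define s where "s n t = first_ball_center (cs n) (inverse (real (Suc n))) (f t)" for n t
  have "dist (s n t) (f t) < inverse (real (Suc n))" for n t
  proof -
    have "f t \<in> (\<Union>c\<in>set (cs n). ball c (inverse (real (Suc n))))" using cs[of n] by blast
    then show ?thesis unfolding s_def by (intro dist_first_ball_center) auto
  qed
  moreover have meas: "s n \<in> borel_measurable \<mu>" for n
    unfolding s_def using measurable_compose[OF assms(2) borel_measurable_first_ball_center] by simp
  moreover have "simple_fn \<mu> (s n)" for n
    unfolding simple_fn_def
  proof (intro conjI allI impI)
    have "range (s n) \<subseteq> range (first_ball_center (cs n) (inverse (real (Suc n))))"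
      unfolding s_def by auto
    then show "finite (range (s n))"
      using range_first_ball_center finite_subset by (metis finite_insert finite_set)
    show "s n -` {y} \<inter> space \<mu> \<in> sets \<mu>" for y
      by (rule measurable_sets[OF meas borel_closed[OF closed_singleton]])
    show "emeasure \<mu> (s n -` {y} \<inter> space \<mu>) < \<infinity>" for y
      using finite_measure.emeasure_finite[OF assms(1)] by (simp add: less_top[symmetric])
  qed
  ultimately show ?thesis using that by blast
qed

lemma blinfun_simple_int:
  fixes s :: "'a \<Rightarrow> 'x::real_normed_vector" and xs :: "'x \<Rightarrow>\<^sub>L real"
  assumes "finite_measure \<mu>" "simple_fn \<mu> s"
  shows "blinfun_apply xs (simple_int \<mu> s) = (\<integral>t. xs (s t) \<partial>\<mu>)"
proof -
  let ?A = "\<lambda>y. s -` {y} \<inter> space \<mu>"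
  have fin: "finite (range s)" and A: "?A y \<in> sets \<mu>" for y
    using assms(2) unfolding simple_fn_def by auto
  have "(\<integral>t. xs (s t) \<partial>\<mu>) = (\<integral>t. (\<Sum>y\<in>range s. indicator (?A y) t * xs y) \<partial>\<mu>)"
  proof (rule Bochner_Integration.integral_cong[OF refl])
    fix t assume "t \<in> space \<mu>"
    then have "(\<Sum>y\<in>range s. indicator (?A y) t * xs y) = (\<Sum>y\<in>range s. if y = s t then xs y else 0)"
      by (intro sum.cong) (auto simp: indicator_def)
    also have "\<dots> = xs (s t)" using fin by simp
    finally show "xs (s t) = (\<Sum>y\<in>range s. indicator (?A y) t * xs y)" by simp
  qed
  also have "\<dots> = (\<Sum>y\<in>range s. measure \<mu> (?A y) * xs y)"
    using A finite_measure.emeasure_finite[OF assms(1)]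
    by (subst Bochner_Integration.integral_sum) (auto simp: less_top[symmetric])
  also have "\<dots> = xs (simple_int \<mu> s)"
    by (simp add: simple_int_def blinfun.sum_right blinfun.scaleR_right)
  finally show ?thesis by simp
qed

lemma integrable_bounded_functional:
  fixes f :: "'a \<Rightarrow> 'x::real_normed_vector" and xs :: "'x \<Rightarrow>\<^sub>L real"
  assumes "finite_measure \<mu>" "f \<in> borel_measurable \<mu>" "bounded (range f)"
  shows "integrable \<mu> (\<lambda>t. blinfun_apply xs (f t))"
proof -
  obtain B where "\<And>t. norm (xs (f t)) \<le> B"
    using bounded_range_blinfun_comp[OF assms(3)] unfolding bounded_iff by blast
  moreover have "(\<lambda>t. xs (f t)) \<in> borel_measurable \<mu>"
    using measurable_compose[OF assms(2) borel_measurable_continuous_onI[OF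
          linear_continuous_on[OF blinfun.bounded_linear_right[of xs]]]] by simp
  ultimately show ?thesis by (intro finite_measure.integrable_const_bound[OF assms(1)]) auto
qed

lemma abs_simple_int_minus_integral_le:
  fixes s f :: "'a \<Rightarrow> 'x::real_normed_vector" and xs :: "'x \<Rightarrow>\<^sub>L real"
  assumes "finite_measure \<mu>" "simple_fn \<mu> s" "s \<in> borel_measurable \<mu>"
    and "f \<in> borel_measurable \<mu>" "bounded (range f)" "\<And>t. dist (s t) (f t) \<le> \<delta>"
  shows "\<bar>xs (simple_int \<mu> s) - (\<integral>t. xs (f t) \<partial>\<mu>)\<bar> \<le> norm xs * \<delta> * measure \<mu> (space \<mu>)"
proof -
  have "bounded (range s)"
    using assms(2) unfolding simple_fn_def by (simp add: finite_imp_bounded)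
  then have int: "integrable \<mu> (\<lambda>t. xs (s t))" "integrable \<mu> (\<lambda>t. xs (f t))"
    using integrable_bounded_functional assms(1,3,4,5) by blast+
  have "\<bar>xs (simple_int \<mu> s) - (\<integral>t. xs (f t) \<partial>\<mu>)\<bar> = norm (\<integral>t. xs (s t) - xs (f t) \<partial>\<mu>)"
    using int by (simp add: blinfun_simple_int[OF assms(1,2)])
  also have "\<dots> \<le> (\<integral>t. norm (xs (s t) - xs (f t)) \<partial>\<mu>)"
    by (rule integral_norm_bound)
  also have "\<dots> \<le> (\<integral>t. norm xs * \<delta> \<partial>\<mu>)"
  proof (rule integral_mono)
    fix t
    have "norm (xs (s t) - xs (f t)) \<le> norm xs * norm (s t - f t)"
      using norm_blinfun[of xs "s t - f t"] by (simp add: blinfun.diff_right)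
    also have "\<dots> \<le> norm xs * \<delta>" using assms(6)[of t] by (simp add: dist_norm mult_left_mono)
    finally show "norm (xs (s t) - xs (f t)) \<le> norm xs * \<delta>" .
  qed (use int finite_measure.integrable_const[OF assms(1)] in auto)
  also have "\<dots> = norm xs * \<delta> * measure \<mu> (space \<mu>)" by simp
  finally show ?thesis .
qed

lemma Cauchy_if_norm_diff_le_inverse:
  fixes w :: "nat \<Rightarrow> 'a::real_normed_vector"
  assumes "0 \<le> C" "\<And>p q. norm (w p - w q) \<le> C * (inverse (real (Suc p)) + inverse (real (Suc q)))"
  shows "Cauchy w"
proof (rule CauchyI)
  fix e :: real assume "e > 0"
  have pos: "0 < 2 * (C + 1)" using assms(1) by simp
  then obtain N where N: "inverse (real (Suc N)) < e / (2 * (C + 1))"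
    using reals_Archimedean[of "e / (2 * (C + 1))"] \<open>e > 0\<close> by auto
  have "norm (w p - w q) < e" if "p \<ge> N" "q \<ge> N" for p q
  proof -
    have "inverse (real (Suc p)) \<le> inverse (real (Suc N))" "inverse (real (Suc q)) \<le> inverse (real (Suc N))"
      using that by (simp_all add: le_imp_inverse_le)
    then have "inverse (real (Suc p)) + inverse (real (Suc q)) \<le> 2 * inverse (real (Suc N))"
      by linarith
    then have "C * (inverse (real (Suc p)) + inverse (real (Suc q))) \<le> (C + 1) * (2 * inverse (real (Suc N)))"
      using assms(1) by (intro mult_mono) auto
    also have "\<dots> = inverse (real (Suc N)) * (2 * (C + 1))" by (simp only: mult_ac)
    also have "\<dots> < e" using N by (simp only: pos_less_divide_eq[OF pos])
    finally show ?thesis using assms(2)[of p q] by linarith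
  qed
  then show "\<exists>N. \<forall>p\<ge>N. \<forall>q\<ge>N. norm (w p - w q) < e" by blast
qed

lemma norm_simple_int_diff_le:
  fixes s1 s2 f :: "'a \<Rightarrow> 'x::real_normed_vector"
  assumes \<mu>: "finite_measure \<mu>" and f: "f \<in> borel_measurable \<mu>" "bounded (range f)"
    and s1: "simple_fn \<mu> s1" "s1 \<in> borel_measurable \<mu>" "\<And>t. dist (s1 t) (f t) \<le> \<delta>1"
    and s2: "simple_fn \<mu> s2" "s2 \<in> borel_measurable \<mu>" "\<And>t. dist (s2 t) (f t) \<le> \<delta>2"
  shows "norm (simple_int \<mu> s1 - simple_int \<mu> s2) \<le> measure \<mu> (space \<mu>) * (\<delta>1 + \<delta>2)"
proof -
  have "\<delta>1 \<ge> 0" "\<delta>2 \<ge> 0" using s1(3) s2(3) zero_le_dist order_trans by blast+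
  have "norm (kappa (simple_int \<mu> s1 - simple_int \<mu> s2)) \<le> measure \<mu> (space \<mu>) * (\<delta>1 + \<delta>2)"
  proof (rule norm_blinfun_bound)
    show "0 \<le> measure \<mu> (space \<mu>) * (\<delta>1 + \<delta>2)" using \<open>\<delta>1 \<ge> 0\<close> \<open>\<delta>2 \<ge> 0\<close> by simp
    fix xs :: "'x \<Rightarrow>\<^sub>L real"
    show "norm (kappa (simple_int \<mu> s1 - simple_int \<mu> s2) xs) \<le> measure \<mu> (space \<mu>) * (\<delta>1 + \<delta>2) * norm xs"
      using abs_simple_int_minus_integral_le[OF \<mu> s1(1,2) f s1(3), of xs]
        abs_simple_int_minus_integral_le[OF \<mu> s2(1,2) f s2(3), of xs]
      by (simp add: blinfun.diff_right algebra_simps)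
  qed
  then show ?thesis by simp
qed

lemma has_bochner_int_uniform_approximation:
  assumes \<mu>: "finite_measure \<mu>" and simple: "\<And>n. simple_fn \<mu> (s n)"
    and close: "\<And>n t. dist (s n t) (f t) < inverse (real (Suc n))"
    and lim: "(\<lambda>n. simple_int \<mu> (s n)) \<longlonglongrightarrow> v"
  shows "has_bochner_int \<mu> f v"
  unfolding has_bochner_int_def
proof (intro exI conjI AE_I2 allI)
  show "simple_fn \<mu> (s n)" for n by (rule simple)
  show "(\<lambda>n. simple_int \<mu> (s n)) \<longlonglongrightarrow> v" by (rule lim)
  show "(\<lambda>n. s n t) \<longlonglongrightarrow> f t" for t
  proof (rule LIM_zero_cancel)
    show "(\<lambda>n. s n t - f t) \<longlonglongrightarrow> 0"
      by (rule Lim_null_comparison[OF always_eventually LIMSEQ_inverse_real_of_nat])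
        (use close[of _ t] in \<open>simp add: dist_norm less_imp_le\<close>)
  qed
  define m where "m = measure \<mu> (space \<mu>)"
  have nn_le: "(\<integral>\<^sup>+ t. ennreal (norm (s n t - f t)) \<partial>\<mu>) \<le> ennreal (inverse (real (Suc n)) * m)" for n
  proof -
    have "(\<integral>\<^sup>+ t. ennreal (norm (s n t - f t)) \<partial>\<mu>) \<le> (\<integral>\<^sup>+ t. ennreal (inverse (real (Suc n))) \<partial>\<mu>)"
      using close[of n] by (intro nn_integral_mono ennreal_leI) (simp add: dist_norm less_imp_le)
    also have "\<dots> = ennreal (inverse (real (Suc n)) * m)"
      using finite_measure.emeasure_eq_measure[OF \<mu>] by (simp add: m_def ennreal_mult)
    finally show ?thesis .
  qed
  have bound_lim: "(\<lambda>n. ennreal (inverse (real (Suc n)) * m)) \<longlonglongrightarrow> 0"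
    using tendsto_ennrealI[OF tendsto_mult[OF LIMSEQ_inverse_real_of_nat tendsto_const]] by simp
  show "(\<lambda>n. \<integral>\<^sup>+ t. ennreal (norm (s n t - f t)) \<partial>\<mu>) \<longlonglongrightarrow> 0"
    by (rule tendsto_sandwich[OF always_eventually always_eventually tendsto_const bound_lim])
      (simp, use nn_le in blast)
qed

lemma has_bochner_int_compact_range:
  fixes f :: "'a \<Rightarrow> 'x::banach"
  assumes \<mu>: "finite_measure \<mu>" and f: "f \<in> borel_measurable \<mu>" "compact (range f)"
  obtains v where "has_bochner_int \<mu> f v" "\<And>xs :: 'x \<Rightarrow>\<^sub>L real. xs v = (\<integral>t. xs (f t) \<partial>\<mu>)"
proof -
  obtain s where simple: "\<And>n. simple_fn \<mu> (s n)" and meas: "\<And>n. s n \<in> borel_measurable \<mu>"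
    and close: "\<And>n t. dist (s n t) (f t) < inverse (real (Suc n))"
    using uniform_simple_approximation[OF assms] by blast
  note close_le = close[THEN less_imp_le]
  define w where "w n = simple_int \<mu> (s n)" for n
  have bounded: "bounded (range f)" using compact_imp_bounded[OF f(2)] .
  have "Cauchy w"
  proof (rule Cauchy_if_norm_diff_le_inverse[OF measure_nonneg])
    show "norm (w p - w q) \<le> measure \<mu> (space \<mu>) * (inverse (real (Suc p)) + inverse (real (Suc q)))"
      for p q
      unfolding w_def
      by (rule norm_simple_int_diff_le[OF \<mu> f(1) bounded simple meas close_le simple meas close_le])
  qed
  then obtain v where v: "w \<longlonglongrightarrow> v" using Cauchy_convergent_iff convergent_def by blast
  have "xs v = (\<integral>t. xs (f t) \<partial>\<mu>)" for xs :: "'x \<Rightarrow>\<^sub>L real"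
  proof (rule LIMSEQ_unique)
    show "(\<lambda>n. xs (w n)) \<longlonglongrightarrow> xs v" using v by (intro blinfun.tendsto) auto
    have "(\<lambda>n. norm xs * inverse (real (Suc n)) * measure \<mu> (space \<mu>)) \<longlonglongrightarrow> 0"
      using tendsto_mult[OF tendsto_mult[OF tendsto_const LIMSEQ_inverse_real_of_nat] tendsto_const] by simp
    then have "(\<lambda>n. xs (w n) - (\<integral>t. xs (f t) \<partial>\<mu>)) \<longlonglongrightarrow> 0"
      unfolding w_def
      by (rule Lim_null_comparison[OF always_eventually, rotated])
        (simp only: real_norm_def abs_simple_int_minus_integral_le[OF \<mu> simple meas f(1) bounded close_le] simp_thms)
    then show "(\<lambda>n. xs (w n)) \<longlonglongrightarrow> (\<integral>t. xs (f t) \<partial>\<mu>)"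
      by (rule LIM_zero_cancel)
  qed
  moreover have "has_bochner_int \<mu> f v"
    using has_bochner_int_uniform_approximation[OF \<mu> simple close] v by (simp add: w_def[abs_def])
  ultimately show ?thesis by (rule that[rotated])
qed

section \<open>The averaging operator\<close>

locale isometric_action =
  fixes act :: "'g::{group_add,topological_space} \<Rightarrow> 'x::banach \<Rightarrow> 'x"
  assumes affine_isometric: "affine_isometric_action act"
begin

abbreviation \<pi> :: "'g \<Rightarrow> 'x \<Rightarrow> 'x" where "\<pi> \<equiv> lin_part act"

lemma act_add: "act (g + h) x = act g (act h x)"
  and linear_\<pi>: "linear (\<pi> g)"
  and dist_act [simp]: "dist (act g x) (act g y) = dist x y"
  and continuous_act: "continuous_on UNIV (\<lambda>p. act (fst p) (snd p))"
  using affine_isometric unfolding affine_isometric_action_def lin_part_def[abs_def] by auto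

lemma act_eq_\<pi>_plus: "act g x = \<pi> g x + act g 0"
  by (simp add: lin_part_def)

lemma norm_\<pi> [simp]: "norm (\<pi> g x) = norm x"
  using dist_act[of g x 0] by (simp add: lin_part_def dist_norm)

lemma bounded_linear_\<pi>: "bounded_linear (\<pi> g)"
  by (rule bounded_linear_intro[where K = 1])
    (simp_all add: linear_add[OF linear_\<pi>] linear_scale[OF linear_\<pi>])

lemma \<pi>_add: "\<pi> (g + h) x = \<pi> g (\<pi> h x)"
proof -
  have "\<pi> (g + h) x = \<pi> g (act h x) - \<pi> g (act h 0)"
    by (simp add: lin_part_def act_add)
  also have "\<dots> = \<pi> g (act h x - act h 0)"
    by (rule linear_diff[OF linear_\<pi>, symmetric])
  finally show ?thesis unfolding lin_part_def[of act h x] .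
qed

lemma continuous_on_orbit: "continuous_on UNIV (\<lambda>g. act g x)"
  using continuous_on_compose2[OF continuous_act, of UNIV "\<lambda>g. (g, x)"]
  by (simp add: continuous_on_Pair)

lemma continuous_on_\<pi>_orbit: "continuous_on UNIV (\<lambda>g. \<pi> g x)"
  unfolding lin_part_def by (intro continuous_intros continuous_on_orbit)

lemma bounded_\<pi>_orbit: "bounded (range (\<lambda>g. \<pi> g x))"
  unfolding bounded_iff by (intro exI[of _ "norm x"]) simp

lemma dist_\<pi>_orbit_left_invariant: "dist (\<pi> (h + a) x) (\<pi> (h + b) x) = dist (\<pi> a x) (\<pi> b x)"
  by (simp add: \<pi>_add dist_norm linear_diff[OF linear_\<pi>, symmetric])

lemma dist_orbit_left_invariant: "dist (act (h + a) x) (act (h + b) x) = dist (act a x) (act b x)"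
  by (simp add: act_add)

lemma bounded_orbits_iff:
  "(\<exists>x. bounded (range (\<lambda>g. act g x))) \<longleftrightarrow> (\<forall>x. bounded (range (\<lambda>g. act g x)))"
proof
  assume "\<exists>x. bounded (range (\<lambda>g. act g x))"
  then obtain x0 B where B: "\<And>g. norm (act g x0) \<le> B" unfolding bounded_iff by blast
  have "norm (act g x) \<le> B + dist x x0" for g x
    using norm_triangle_ineq[of "act g x0" "act g x - act g x0"] B[of g] dist_act[of g x x0]
    by (simp add: dist_norm)
  then show "\<forall>x. bounded (range (\<lambda>g. act g x))" unfolding bounded_iff by blast
qed blast

lemma dual_act_apply [simp]: "dual_act act g xs y = xs (\<pi> (- g) y)"
  unfolding dual_act_def
  by (simp add: bounded_linear_Blinfun_apply bounded_linear_compose[OF blinfun.bounded_linear_right bounded_linear_\<pi>])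

lemma dual_fixed_pts_iff: "xs \<in> dual_fixed_pts act \<longleftrightarrow> (\<forall>g y. xs (\<pi> g y) = xs y)"
proof
  assume "xs \<in> dual_fixed_pts act"
  then have "dual_act act (- g) xs y = xs y" for g y by (simp add: dual_fixed_pts_def)
  then show "\<forall>g y. xs (\<pi> g y) = xs y" by simp
qed (auto simp: dual_fixed_pts_def intro: blinfun_eqI)

end

text \<open>\<open>D\<close> is the domain of the mean (\<open>Cb_u\<close> or bounded Borel functions); only the closure
  properties below are used.\<close>
locale invariant_mean_action = isometric_action act
  for act :: "'g::{group_add,topological_space} \<Rightarrow> 'x::banach \<Rightarrow> 'x" +
  fixes M :: "('g \<Rightarrow> real) \<Rightarrow> real"
    and D :: "('g \<Rightarrow> real) set"
  assumes bi_invariant: "bi_invariant_mean_on D M"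
    and const_in_D: "(\<lambda>_. c) \<in> D"
    and lin_comb_in_D: "f \<in> D \<Longrightarrow> h \<in> D \<Longrightarrow> (\<lambda>t. a * f t + b * h t) \<in> D"
    and \<pi>_orbit_in_D: "(\<lambda>g. blinfun_apply xs (lin_part act g x)) \<in> D"
    and bounded_orbit_in_D: "bounded (range (\<lambda>g. act g 0)) \<Longrightarrow> (\<lambda>g. blinfun_apply xs (act g 0)) \<in> D"
begin

lemma M_lin_comb: "f \<in> D \<Longrightarrow> h \<in> D \<Longrightarrow> M (\<lambda>t. a * f t + b * h t) = a * M f + b * M h"
  and M_nonneg: "f \<in> D \<Longrightarrow> (\<And>t. f t \<ge> 0) \<Longrightarrow> M f \<ge> 0"
  and M_one: "M (\<lambda>_. 1) = 1"
  and M_lshift: "f \<in> D \<Longrightarrow> M (lshift g f) = M f"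
  and M_rshift: "f \<in> D \<Longrightarrow> M (rshift f g) = M f"
  using bi_invariant unfolding bi_invariant_mean_on_def mean_on_def by auto

lemma M_const [simp]: "M (\<lambda>_. c) = c"
  using M_lin_comb[OF const_in_D const_in_D, of c 1 0 1] M_one by simp

lemma M_add: "f \<in> D \<Longrightarrow> h \<in> D \<Longrightarrow> M (\<lambda>t. f t + h t) = M f + M h"
  using M_lin_comb[of f h 1 1] by simp

lemma M_scale: "f \<in> D \<Longrightarrow> M (\<lambda>t. a * f t) = a * M f"
  using M_lin_comb[of f f a 0] by simp

lemma abs_M_le:
  assumes f: "f \<in> D" and bound: "\<And>t. \<bar>f t\<bar> \<le> c"
  shows "\<bar>M f\<bar> \<le> c"
proof -
  have "0 \<le> c + s * M f" if "s = 1 \<or> s = - 1" for s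
  proof -
    have "0 \<le> M (\<lambda>t. c * 1 + s * f t)"
    proof (intro M_nonneg lin_comb_in_D const_in_D f)
      show "0 \<le> c * 1 + s * f t" for t using bound[of t] that by (auto simp: abs_le_iff)
    qed
    also have "\<dots> = c + s * M f" using M_lin_comb[OF const_in_D[of 1] f] M_one by simp
    finally show ?thesis .
  qed
  from this[of 1] this[of "- 1"] show ?thesis by (simp add: abs_le_iff)
qed

definition orbit_mean :: "'x \<Rightarrow> ('x \<Rightarrow>\<^sub>L real) \<Rightarrow> real" where
  "orbit_mean x xs = M (\<lambda>g. xs (\<pi> g x))"

lemma abs_orbit_mean_le: "\<bar>orbit_mean x xs\<bar> \<le> norm x * norm xs"
  unfolding orbit_mean_def
  by (rule abs_M_le[OF \<pi>_orbit_in_D]) (metis norm_blinfun norm_\<pi> real_norm_def mult.commute)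

lemma orbit_mean_add_left: "orbit_mean (x + y) xs = orbit_mean x xs + orbit_mean y xs"
  unfolding orbit_mean_def
  by (simp add: linear_add[OF linear_\<pi>] blinfun.add_right M_add[OF \<pi>_orbit_in_D \<pi>_orbit_in_D])

lemma orbit_mean_scale_left: "orbit_mean (r *\<^sub>R x) xs = r * orbit_mean x xs"
  unfolding orbit_mean_def
  by (simp add: linear_scale[OF linear_\<pi>] blinfun.scaleR_right M_scale[OF \<pi>_orbit_in_D])

lemma bounded_linear_orbit_mean: "bounded_linear (orbit_mean x)"
proof (rule bounded_linear_intro[where K = "norm x"])
  show "orbit_mean x (xs + ys) = orbit_mean x xs + orbit_mean x ys" for xs ys
    unfolding orbit_mean_def by (simp add: blinfun.add_left M_add[OF \<pi>_orbit_in_D \<pi>_orbit_in_D])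
  show "orbit_mean x (r *\<^sub>R xs) = r *\<^sub>R orbit_mean x xs" for r xs
    unfolding orbit_mean_def by (simp add: blinfun.scaleR_left M_scale[OF \<pi>_orbit_in_D])
  show "norm (orbit_mean x xs) \<le> norm xs * norm x" for xs
    using abs_orbit_mean_le by (simp add: mult.commute)
qed

lemma bounded_linear_Blinfun_orbit_mean: "bounded_linear (\<lambda>x. Blinfun (orbit_mean x))"
proof (rule bounded_linear_intro[where K = 1])
  show "Blinfun (orbit_mean (x + y)) = Blinfun (orbit_mean x) + Blinfun (orbit_mean y)" for x y
    by (rule blinfun_eqI)
      (simp add: bounded_linear_Blinfun_apply[OF bounded_linear_orbit_mean] orbit_mean_add_left plus_blinfun.rep_eq)
  show "Blinfun (orbit_mean (r *\<^sub>R x)) = r *\<^sub>R Blinfun (orbit_mean x)" for r x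
    by (rule blinfun_eqI)
      (simp add: bounded_linear_Blinfun_apply[OF bounded_linear_orbit_mean] orbit_mean_scale_left scaleR_blinfun.rep_eq)
  show "norm (Blinfun (orbit_mean x)) \<le> norm x * 1" for x
    by (rule norm_blinfun_bound)
      (simp_all add: bounded_linear_Blinfun_apply[OF bounded_linear_orbit_mean] abs_orbit_mean_le)
qed

definition RG :: "'x \<Rightarrow>\<^sub>L (('x \<Rightarrow>\<^sub>L real) \<Rightarrow>\<^sub>L real)" where
  "RG = Blinfun (\<lambda>x. Blinfun (orbit_mean x))"

lemma RG_apply [simp]: "RG x xs = M (\<lambda>g. xs (\<pi> g x))"
  unfolding RG_def orbit_mean_def[symmetric]
  by (simp add: bounded_linear_Blinfun_apply bounded_linear_Blinfun_orbit_mean bounded_linear_orbit_mean)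

lemma norm_RG_apply_le: "norm (RG x) \<le> norm x"
  by (rule norm_blinfun_bound) (simp_all add: abs_orbit_mean_le[unfolded orbit_mean_def])

lemma norm_RG_le: "norm RG \<le> 1"
  by (rule norm_blinfun_bound) (simp_all add: norm_RG_apply_le)

lemma RG_dual_act: "RG x (dual_act act (- g) xs) = RG x xs"
  using M_lshift[OF \<pi>_orbit_in_D, where g = "- g"] by (simp add: lshift_def \<pi>_add)

lemma bidual_act_RG: "bidual_act act g (RG x) = RG x"
  unfolding bidual_act_def RG_dual_act by (rule blinfun_apply_inverse)

lemma RG_\<pi>: "RG (\<pi> g x) = RG x"
  using M_rshift[OF \<pi>_orbit_in_D, where g = "- g"] by (intro blinfun_eqI) (simp add: rshift_def \<pi>_add)

lemma RG_fixed_pt: "x \<in> fixed_pts act \<Longrightarrow> RG x = kappa x"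
  by (intro blinfun_eqI) (simp add: fixed_pts_def)

lemma range_RG_Int_range_kappa: "range RG \<inter> range kappa = kappa ` fixed_pts act"
proof (intro equalityI subsetI)
  fix w assume w: "w \<in> range RG \<inter> range kappa"
  then obtain x where x: "RG x = w" by (metis IntD1 rangeE)
  from w obtain z where z: "kappa z = w" by (metis IntD2 rangeE)
  have "xs (\<pi> g z) = xs z" for g and xs :: "'x \<Rightarrow>\<^sub>L real"
  proof -
    have "xs (\<pi> g z) = kappa z (dual_act act (- g) xs)" by simp
    also have "\<dots> = kappa z xs" unfolding z x[symmetric] by (rule RG_dual_act)
    finally show ?thesis by simp
  qed
  then have "kappa (\<pi> g z) = kappa z" for g by (intro blinfun_eqI) simp
  then have "z \<in> fixed_pts act" by (simp add: fixed_pts_def)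
  then show "w \<in> kappa ` fixed_pts act" using z by (rule rev_image_eqI[OF _ sym])
next
  fix w assume "w \<in> kappa ` fixed_pts act"
  then obtain y where "y \<in> fixed_pts act" and w: "w = kappa y" by blast
  then have "RG y = w" by (simp add: RG_fixed_pt)
  then show "w \<in> range RG \<inter> range kappa" using w by blast
qed

lemma kernel_RG_Int_fixed_pts: "{x. RG x = 0} \<inter> fixed_pts act = {0}"
proof (intro set_eqI iffI)
  fix x assume "x \<in> {x. RG x = 0} \<inter> fixed_pts act"
  then have "RG x = 0" "x \<in> fixed_pts act" by auto
  then show "x \<in> {0}" using RG_fixed_pt norm_kappa[of x] by force
qed (simp add: fixed_pts_def lin_part_def blinfun.zero_right)

lemma norm_fixed_pt_le: "RG k = 0 \<Longrightarrow> y \<in> fixed_pts act \<Longrightarrow> norm y \<le> norm (k + y)"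
  using norm_RG_apply_le[of "k + y"] RG_fixed_pt[of y] by (simp add: blinfun.add_right)

lemma RG_dual_fixed_pt: "xs \<in> dual_fixed_pts act \<Longrightarrow> RG x xs = xs x"
  by (simp add: dual_fixed_pts_iff)

lemma Ptilde_RG_dual_fixed: "Ptilde RG xs \<in> dual_fixed_pts act"
  by (simp add: dual_fixed_pts_iff RG_\<pi>)

lemma Ptilde_RG_projection:
  "bounded_linear (Ptilde RG) \<and> (\<forall>xs. Ptilde RG (Ptilde RG xs) = Ptilde RG xs) \<and>
   (\<forall>xs. norm (Ptilde RG xs) \<le> norm xs) \<and> range (Ptilde RG) = dual_fixed_pts act"
proof (intro conjI allI)
  show "bounded_linear (Ptilde RG)"
    unfolding Ptilde_def
    by (rule bounded_linear_compose[OF bounded_bilinear.bounded_linear_left bounded_linear_kappa])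
      (rule bounded_bilinear_blinfun_compose)
  show norm: "norm (Ptilde RG xs) \<le> norm xs" for xs
  proof -
    have "norm (Ptilde RG xs) \<le> norm xs * norm RG"
      unfolding Ptilde_def using norm_blinfun_compose[of "kappa xs" RG] by simp
    also have "\<dots> \<le> norm xs" using norm_RG_le by (simp add: mult_left_le)
    finally show ?thesis .
  qed
  have fix_dual: "Ptilde RG xs = xs" if "xs \<in> dual_fixed_pts act" for xs
    using that by (intro blinfun_eqI) (simp add: dual_fixed_pts_iff)
  show "Ptilde RG (Ptilde RG xs) = Ptilde RG xs" for xs
    by (rule fix_dual[OF Ptilde_RG_dual_fixed])
  show "range (Ptilde RG) = dual_fixed_pts act"
  proof (intro equalityI subsetI)
    show "xs \<in> dual_fixed_pts act" if "xs \<in> range (Ptilde RG)" for xs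
      using that Ptilde_RG_dual_fixed by blast
    show "xs \<in> range (Ptilde RG)" if "xs \<in> dual_fixed_pts act" for xs
      using rangeI[of "Ptilde RG" xs] fix_dual[OF that] by simp
  qed
qed

lemma kernel_RG: "{x. RG x = 0} = pre_annihilator (dual_fixed_pts act)"
proof (intro equalityI subsetI)
  fix x assume "x \<in> {x. RG x = 0}"
  then have "a x = 0" if "a \<in> dual_fixed_pts act" for a
    using RG_dual_fixed_pt[OF that, of x] by simp
  then show "x \<in> pre_annihilator (dual_fixed_pts act)"
    by (simp add: pre_annihilator_def)
next
  fix x assume "x \<in> pre_annihilator (dual_fixed_pts act)"
  then have "Ptilde RG xs x = 0" for xs
    using Ptilde_RG_dual_fixed[of xs] unfolding pre_annihilator_def by blast
  then have "RG x xs = 0" for xs by simp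
  then show "x \<in> {x. RG x = 0}" by (auto intro: blinfun_eqI)
qed

lemma RG_translation_part:
  assumes "bounded (range (\<lambda>g. act g 0))"
  shows "RG (act g 0) = (0 :: ('x \<Rightarrow>\<^sub>L real) \<Rightarrow>\<^sub>L real)"
proof (rule blinfun_eqI)
  fix xs :: "'x \<Rightarrow>\<^sub>L real"
  define F where "F h = xs (act h 0)" for h
  have F: "F \<in> D" unfolding F_def by (rule bounded_orbit_in_D[OF assms])
  \<comment> \<open>Cocycle identity \<open>act (h + g) 0 = \<pi> h (act g 0) + act h 0\<close>: the averaged function is a
    right translate of \<open>F\<close> minus \<open>F\<close>, so right invariance kills it.\<close>
  have shifted: "rshift F (- g) = (\<lambda>h. 1 * xs (\<pi> h (act g 0)) + 1 * F h)"
    by (auto simp: rshift_def F_def act_add lin_part_def blinfun.diff_right)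
  have shifted_in_D: "rshift F (- g) \<in> D"
    unfolding shifted by (intro lin_comb_in_D \<pi>_orbit_in_D F)
  have "RG (act g 0) xs = M (\<lambda>h. 1 * rshift F (- g) h + (- 1) * F h)"
    by (simp add: shifted)
  also have "\<dots> = 1 * M (rshift F (- g)) + (- 1) * M F"
    by (rule M_lin_comb[OF shifted_in_D F])
  also have "\<dots> = 0" using M_rshift[OF F] by simp
  finally show "RG (act g 0) xs = blinfun_apply 0 xs" by simp
qed

lemma RG_act:
  assumes "\<exists>x. bounded (range (\<lambda>g. act g x))"
  shows "RG (act g x) = RG x"
proof -
  have "bounded (range (\<lambda>g. act g 0))" using assms bounded_orbits_iff by blast
  then have "RG (\<pi> g x + act g 0) = RG x"
    using RG_\<pi>[of g x] RG_translation_part by (simp add: blinfun.add_right)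
  then show ?thesis by (simp flip: act_eq_\<pi>_plus)
qed

lemma factorization_through_kappa:
  assumes RG_eq: "\<And>x. RG x = kappa (T x)"
  shows "bounded_linear T" "T (T x) = T x" "range T = fixed_pts act" "norm (T x) \<le> norm x"
proof -
  have fixed: "T y \<in> fixed_pts act" for y
  proof -
    have "kappa (T y) \<in> range RG" using rangeI[of "blinfun_apply RG" y] unfolding RG_eq .
    then have "kappa (T y) \<in> kappa ` fixed_pts act" unfolding range_RG_Int_range_kappa[symmetric] by blast
    then show ?thesis by auto
  qed
  have id: "T y = y" if "y \<in> fixed_pts act" for y
    using RG_eq[of y] RG_fixed_pt[OF that] by simp
  have norm_le: "norm (T y) \<le> norm y" for y
    using norm_RG_apply_le[of y] by (simp add: RG_eq)
  show "bounded_linear T"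
  proof (rule bounded_linear_intro[where K = 1])
    show "T (x + y) = T x + T y" for x y
    proof -
      have "kappa (T (x + y)) = kappa (T x + T y)"
        by (simp add: kappa_add blinfun.add_right flip: RG_eq)
      then show ?thesis by simp
    qed
    show "T (r *\<^sub>R x) = r *\<^sub>R T x" for r x
    proof -
      have "kappa (T (r *\<^sub>R x)) = kappa (r *\<^sub>R T x)"
        by (simp add: kappa_scaleR blinfun.scaleR_right flip: RG_eq)
      then show ?thesis by simp
    qed
    show "norm (T x) \<le> norm x * 1" for x using norm_le by simp
  qed
  show "T (T x) = T x" by (rule id[OF fixed])
  show "range T = fixed_pts act"
  proof (intro equalityI subsetI)
    show "y \<in> fixed_pts act" if "y \<in> range T" for y using that fixed by blast
    show "y \<in> range T" if "y \<in> fixed_pts act" for y using rangeI[of T y] id[OF that] by simp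
  qed
  show "norm (T x) \<le> norm x" by (rule norm_le)
qed

lemma compact_group_RG:
  fixes \<mu> :: "'g measure"
  assumes "compact (UNIV :: 'g set)" "Haar_probability \<mu>" "\<forall>f\<in>D. M f = integral\<^sup>L \<mu> f"
  shows "\<exists>T. (\<forall>x. RG x = kappa (T x)) \<and> bounded_linear T \<and> (\<forall>x. T (T x) = T x) \<and>
    range T = fixed_pts act \<and> (\<forall>x. norm (T x) \<le> norm x) \<and> (\<forall>x. has_bochner_int \<mu> (\<lambda>g. \<pi> g x) (T x))"
proof -
  have "space \<mu> = UNIV" and sets: "sets \<mu> = sets borel" and "emeasure \<mu> UNIV = 1"
    using assms(2) unfolding Haar_probability_def left_Haar_def by auto
  then have \<mu>: "finite_measure \<mu>" by (intro finite_measureI) simp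
  have "\<exists>v. has_bochner_int \<mu> (\<lambda>g. \<pi> g x) v \<and> RG x = kappa v" for x
  proof -
    have "(\<lambda>g. \<pi> g x) \<in> borel_measurable \<mu>"
      using borel_measurable_continuous_onI[OF continuous_on_\<pi>_orbit] measurable_cong_sets[OF sets refl]
      by blast
    moreover have "compact (range (\<lambda>g. \<pi> g x))"
      by (rule compact_continuous_image[OF continuous_on_\<pi>_orbit assms(1)])
    ultimately obtain v where "has_bochner_int \<mu> (\<lambda>g. \<pi> g x) v"
      and "\<And>xs :: 'x \<Rightarrow>\<^sub>L real. xs v = (\<integral>g. xs (\<pi> g x) \<partial>\<mu>)"
      using has_bochner_int_compact_range[OF \<mu>] by blast
    moreover have "RG x = kappa v"
      using assms(3) \<pi>_orbit_in_D calculation(2) by (intro blinfun_eqI) simp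
    ultimately show ?thesis by blast
  qed
  then obtain T where T: "\<And>x. has_bochner_int \<mu> (\<lambda>g. \<pi> g x) (T x)" "\<And>x. RG x = kappa (T x)"
    by metis
  show ?thesis
    using factorization_through_kappa[OF T(2)] T by blast
qed

end

lemma invariant_mean_action_SIN:
  fixes act :: "'g::{group_add,topological_space} \<Rightarrow> 'x::banach \<Rightarrow> 'x"
  assumes "top_group TYPE('g)" "SIN_group TYPE('g)" "affine_isometric_action act"
    "bi_invariant_mean_on Cb_u M"
  shows "invariant_mean_action act M Cb_u"
proof -
  interpret isometric_action act by (rule isometric_action.intro[OF assms(3)])
  show ?thesis
    by unfold_locales (auto intro!: assms(4) const_in_Cb_u lin_comb_in_Cb_u
        functional_in_Cb_u[OF assms(1,2)] continuous_on_\<pi>_orbit continuous_on_orbit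
        bounded_\<pi>_orbit dist_\<pi>_orbit_left_invariant dist_orbit_left_invariant)
qed

lemma invariant_mean_action_Haar:
  fixes act :: "'g::{group_add,topological_space} \<Rightarrow> 'x::banach \<Rightarrow> 'x"
  assumes "sets \<mu> = sets borel" "affine_isometric_action act" "bi_invariant_mean_on (Linf_repr \<mu>) M"
  shows "invariant_mean_action act M (Linf_repr \<mu>)"
proof -
  interpret isometric_action act by (rule isometric_action.intro[OF assms(2)])
  show ?thesis
    by unfold_locales (auto intro!: assms(3) const_in_Linf_repr lin_comb_in_Linf_repr
        continuous_functional_in_Linf_repr[OF assms(1)] continuous_on_\<pi>_orbit continuous_on_orbit
        bounded_\<pi>_orbit)
qed

theorem lemma3p2:
  fixes act :: "'g::{group_add,t2_space} \<Rightarrow> 'x::banach \<Rightarrow> 'x"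
    and M :: "('g \<Rightarrow> real) \<Rightarrow> real"
    and D :: "('g \<Rightarrow> real) set"
  assumes G: "top_group TYPE('g)" "amenable TYPE('g)"
    and act: "affine_isometric_action act"
    and mean: "(SIN_group TYPE('g) \<and> D = Cb_u) \<or>
               (locally_compact_space (euclidean :: 'g topology) \<and>
                 (\<exists>\<mu>. left_Haar \<mu> \<and> D = Linf_repr \<mu> \<and> respects_ae \<mu> D M))"
    and bi: "bi_invariant_mean_on D M"
  shows "\<exists>R :: 'x \<Rightarrow>\<^sub>L (('x \<Rightarrow>\<^sub>L real) \<Rightarrow>\<^sub>L real).
     (\<forall>x xs. blinfun_apply (blinfun_apply R x) xs = M (\<lambda>g. blinfun_apply xs (lin_part act g x))) \<and>
     norm R \<le> 1 \<and>
     \<comment> \<open>(1)\<close>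
     (\<forall>g x. bidual_act act g (R x) = R x \<and> R x = R (lin_part act g x)) \<and>
     \<comment> \<open>(2)\<close>
     (range (blinfun_apply R) \<inter> range kappa = kappa ` fixed_pts act) \<and>
     (\<forall>x\<in>fixed_pts act. R x = kappa x) \<and>
     \<comment> \<open>(3)\<close>
     ({x. R x = 0} \<inter> fixed_pts act = {0}) \<and>
     (\<forall>k y. R k = 0 \<longrightarrow> y \<in> fixed_pts act \<longrightarrow> norm y \<le> norm (k + y)) \<and>
     \<comment> \<open>(4)\<close>
     (bounded_linear (Ptilde R) \<and> (\<forall>xs. Ptilde R (Ptilde R xs) = Ptilde R xs) \<and>
      (\<forall>xs. norm (Ptilde R xs) \<le> norm xs) \<and> range (Ptilde R) = dual_fixed_pts act) \<and>
     \<comment> \<open>(5)\<close>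
     ({x. R x = 0} = pre_annihilator (dual_fixed_pts act)) \<and>
     \<comment> \<open>(a)\<close>
     ((\<exists>x. bounded (range (\<lambda>g. act g x))) \<longleftrightarrow> (\<forall>x. bounded (range (\<lambda>g. act g x)))) \<and>
     ((\<exists>x. bounded (range (\<lambda>g. act g x))) \<longrightarrow>
        (\<forall>g x. R (act g x) = R x) \<and>
        (\<forall>xs g x. Ptilde R xs (act g x) = Ptilde R xs x)) \<and>
     \<comment> \<open>(b)\<close>
     (\<forall>\<mu>. compact (UNIV :: 'g set) \<and> Haar_probability \<mu> \<and> (\<forall>f\<in>D. M f = integral\<^sup>L \<mu> f) \<longrightarrow>
        (\<exists>T :: 'x \<Rightarrow> 'x. (\<forall>x. R x = kappa (T x)) \<and>
           bounded_linear T \<and> (\<forall>x. T (T x) = T x) \<and> range T = fixed_pts act \<and>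
           (\<forall>x. norm (T x) \<le> norm x) \<and>
           (\<forall>x. has_bochner_int \<mu> (\<lambda>g. lin_part act g x) (T x))))"
proof -
  have "invariant_mean_action act M D"
    using mean
  proof (elim disjE conjE exE)
    assume "SIN_group TYPE('g)" "D = Cb_u"
    then show ?thesis using invariant_mean_action_SIN[OF G(1) _ act] bi by simp
  next
    fix \<mu> :: "'g measure" assume "left_Haar \<mu>" "D = Linf_repr \<mu>"
    then show ?thesis using invariant_mean_action_Haar[OF _ act] bi by (simp add: left_Haar_def)
  qed
  then interpret invariant_mean_action act M D .
  show ?thesis
    by (intro exI[of _ RG] conjI allI ballI impI norm_RG_le bidual_act_RG RG_\<pi>[symmetric]
        range_RG_Int_range_kappa RG_fixed_pt kernel_RG_Int_fixed_pts norm_fixed_pt_le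
        Ptilde_RG_projection kernel_RG bounded_orbits_iff RG_act compact_group_RG)
      (simp_all add: RG_act)
qed

end
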